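(* Let $T_1=(Q_1,\Sigma,\Delta,R_1,q_1^0)$ and $T_2=(Q_2,\Delta,\Omega,R_2,q_2^0)$ be top-down tree transducers, let $\hat{T}_1$ be the product construction of $T_1$ and the domain automaton of $T_2$, and let $M$ be the look-ahead transducer constructed from $T_1$ and $T_2$ as described in the context. Let $(q_1,S)$ be a state of $\hat{T}_1$ and $q_2$ a state of $T_2$ such that $(q_1,S,q_2)$ is a state of $M$. If on input $s\in T_\Sigma$ the state $(q_1,S)$ of $\hat{T}_1$ can produce the tree $t$, and on input $t$ the state $q_2$ of $T_2$ can produce the tree $r$, then the state $(q_1,S,q_2)$ of $M$ can produce $r$ on input $s$.
   Context: A top-down tree transducer $T=(Q,\Sigma,\Delta,R,q_0)$ has finite state set $Q$, ranked input/output alphabets $\Sigma,\Delta$, initial state $q_0$, and finite rule set $R$ of rules $q(a(x_1,\dots,x_k))\to t$ with $a\in\Sigma_k$ ($\Sigma_k$ = symbols of rank $k$) and $t$ a tree over $\Delta$ whose leaves may additionally be of the form $q'(x_i)$, $q'\in Q$, $i\in[k]$; rules are used as rewrite rules in the usual way; a state $q$ produces $t$ on input $s$ if the tree $t$ over $\Delta$ is derivable from $q(s)$. For $q\in Q$, $a\in\Sigma_k$, $\text{rhs}_T(q,a)$ is the set of right-hand sides of rules with left-hand side $q(a(x_1,\dots,x_k))$; for a right-hand side $\xi$ (resp. a set $\Gamma$ of right-hand sides), $\xi[x_i]$ (resp. $\Gamma[x_i]$) is the set of states $q'$ such that $q'(x_i)$ occurs in $\xi$ (resp. in some tree of $\Gamma$).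 Domain automaton of $T$: the top-down tree automaton (transducer over $\Sigma$ with rules of the form $p(a(x_1,\dots,x_k))\to a(p_1(x_1),\dots,p_k(x_k))$) with states all subsets of $Q$, initial state $\{q_0\}$, rules $S(a(x_1,\dots,x_k))\to a(S_1(x_1),\dots,S_k(x_k))$ for every $a\in\Sigma_k$, nonempty $S=\{q_1,\dots,q_n\}\subseteq Q$ and nonempty $\Gamma_j\subseteq\text{rhs}_T(q_j,a)$ ($j\in[n]$), where $S_i=\bigcup_j\Gamma_j[x_i]$, and rules $\emptyset(a(x_1,\dots,x_k))\to a(\emptyset(x_1),\dots,\emptyset(x_k))$ for all $a$; for an automaton state $l$, $\text{dom}(l)$ is the set of trees accepted from $l$. Product construction of transducers $T=(Q,\Sigma,\Delta,R,q_0)$ and $T'=(Q',\Delta,\Omega,R',q'_0)$: the transducer with states $Q\times Q'$, initial state $(q_0,q'_0)$, and, for every rule $q(a(x_1,\dots,x_k))\to\xi$ of $T$, every $p\in Q'$ and every tree $\zeta$ derivable from $p(\xi)$ using rules of $T'$ in which the leaves of $\xi$ of the form $q''(x_i)$ are treated as unrewritable symbols and a state $p'$ applied to such a leaf stays as $p'(q''(x_i))$, the rule $(q,p)(a(x_1,\dots,x_k))\to\zeta'$ (said to be obtained from the rule $q(a(x_1,\dots,x_k))\to\xi$ by translating $\xi$ with $p$), where $\zeta'$ replaces each $p'(q''(x_i))$ by $(q'',p')(x_i)$. A top-down tree transducer with look-ahead is a tuple $(Q,\Sigma,\Delta,R,q_0,B)$ where $B$ is a top-down tree automaton over $\Sigma$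 with state set $L$ and rules have the form $q(a(x_1\!:\!l_1,\dots,x_k\!:\!l_k))\to t$ with $l_i\in L$; on input $s$, each node $v$ with label $a\in\Sigma_k$ is first relabeled by $\langle a,l_1,\dots,l_k\rangle$ where $l_i\in L$ are such that the $i$-th subtree of $v$ is in $\text{dom}(l_i)$, and the relabeled tree is then processed reading each rule as $q(\langle a,l_1,\dots,l_k\rangle(x_1,\dots,x_k))\to t$; a state produces $r$ on input $s$ if $r$ is obtainable this way starting from that state. Construction of $M$: let $\hat{T}_1$ be the product construction of $T_1$ and the domain automaton of $T_2$ (states written $(q,S)$ with $q\in Q_1$, $S\subseteq Q_2$), and $N$ the product construction of $\hat{T}_1$ and $T_2$ (states written $(q,S,q')$). The states of $M$ are the $(q,S,q')$ with $q'\in S$; its initial state is $(q_1^0,\{q_2^0\},q_2^0)$; its look-ahead automaton is the domain automaton $\hat{A}$ of $\hat{T}_1$. For every rule $(q,S,q')(a(x_1,\dots,x_k))\to\gamma$ of $N$ involving only such states, obtained from the rule $(q,S)(a(x_1,\dots,x_k))\to\xi$ of $\hat{T}_1$ by translating $\xi$ with $q'$, and for all states $l_1,\dots,l_k$ of $\hat{A}$ with $\xi[x_i]\subseteq l_i$ ($i\in[k]$), $M$ has the rule $(q,S,q')(a(x_1\!:\!l_1,\dots,x_k\!:\!l_k))\to\gamma$. *)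

theory Defs
  imports Main
begin

datatype 'f tree = Node 'f "'f tree list"

text \<open>Trees whose leaves may additionally be variables (used for right-hand sides,
where Var (q, i) stands for q(x_i), and for sentential forms, where Var (q, u) stands
for the state q applied to the (input) tree u).\<close>
datatype ('f, 'v) trm = Var 'v | Fun 'f "('f, 'v) trm list"

fun to_trm :: "'f tree \<Rightarrow> ('f, 'v) trm" where
  "to_trm (Node f ts) = Fun f (map to_trm ts)"

fun subst :: "('v \<Rightarrow> ('f, 'w) trm) \<Rightarrow> ('f, 'v) trm \<Rightarrow> ('f, 'w) trm" where
  "subst \<sigma> (Var v) = \<sigma> v"
| "subst \<sigma> (Fun f ts) = Fun f (map (subst \<sigma>) ts)"

fun ranked :: "('f \<times> nat) set \<Rightarrow> 'f tree \<Rightarrow> bool" where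
  "ranked \<Sigma> (Node f ts) \<longleftrightarrow> (f, length ts) \<in> \<Sigma> \<and> (\<forall>t\<in>set ts. ranked \<Sigma> t)"

text \<open>A rule (q, a, k, xi) stands for q(a(x_1,...,x_k)) -> xi; in xi, Var (q', i) stands
for q'(x_i) (1-based index i).\<close>
record ('q, 'f, 'g) tdtt =
  states :: "'q set"
  inp :: "('f \<times> nat) set"
  outp :: "('g \<times> nat) set"
  rules :: "('q \<times> 'f \<times> nat \<times> ('g, 'q \<times> nat) trm) set"
  init :: 'q

fun wf_rhs :: "('g \<times> nat) set \<Rightarrow> 'q set \<Rightarrow> nat \<Rightarrow> ('g, 'q \<times> nat) trm \<Rightarrow> bool" where
  "wf_rhs \<Delta> Q k (Var (q, i)) \<longleftrightarrow> q \<in> Q \<and> 1 \<le> i \<and> i \<le> k"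
| "wf_rhs \<Delta> Q k (Fun g ts) \<longleftrightarrow> (g, length ts) \<in> \<Delta> \<and> (\<forall>t\<in>set ts. wf_rhs \<Delta> Q k t)"

definition wf_tdtt :: "('q, 'f, 'g) tdtt \<Rightarrow> bool" where
  "wf_tdtt T \<longleftrightarrow> finite (states T) \<and> finite (inp T) \<and> finite (outp T) \<and> finite (rules T)
     \<and> init T \<in> states T
     \<and> (\<forall>(q, a, k, \<xi>) \<in> rules T. q \<in> states T \<and> (a, k) \<in> inp T \<and> wf_rhs (outp T) (states T) k \<xi>)"

text \<open>One rewrite step on sentential forms: Var (q, u) denotes q(u). Only subterms
Var (q, Fun a ss) can be rewritten; Var (q, Var v) is an unrewritable leaf.\<close>
inductive step :: "('q, 'f, 'g) tdtt \<Rightarrow> ('g, 'q \<times> ('f, 'v) trm) trm \<Rightarrow> ('g, 'q \<times> ('f, 'v) trm) trm \<Rightarrow> bool"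
  for T where
  root: "(q, a, length ss, \<xi>) \<in> rules T \<Longrightarrow>
         step T (Var (q, Fun a ss)) (subst (\<lambda>(q', i). Var (q', ss ! (i - 1))) \<xi>)"
| ctxt: "i < length us \<Longrightarrow> step T (us ! i) u' \<Longrightarrow> step T (Fun g us) (Fun g (us[i := u']))"

definition produces :: "('q, 'f, 'g) tdtt \<Rightarrow> 'q \<Rightarrow> 'f tree \<Rightarrow> 'g tree \<Rightarrow> bool" where
  "produces T q s t \<longleftrightarrow> (step T)\<^sup>*\<^sup>* (Var (q, to_trm s :: ('f, unit) trm)) (to_trm t)"

definition rhs_set :: "('q, 'f, 'g) tdtt \<Rightarrow> 'q \<Rightarrow> 'f \<Rightarrow> nat \<Rightarrow> ('g, 'q \<times> nat) trm set" where
  "rhs_set T q a k = {\<xi>. (q, a, k, \<xi>) \<in> rules T}"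

definition vars_at :: "('g, 'q \<times> nat) trm \<Rightarrow> nat \<Rightarrow> 'q set" where
  "vars_at \<xi> i = {q. (q, i) \<in> set2_trm \<xi>}"

definition dom_aut :: "('q, 'f, 'g) tdtt \<Rightarrow> ('q set, 'f, 'f) tdtt" where
  "dom_aut T = \<lparr> states = Pow (states T), inp = inp T, outp = inp T,
     rules = {(S, a, k, Fun a (map (\<lambda>i. Var (\<Union>q\<in>S. \<Union>\<xi>\<in>\<Gamma> q. vars_at \<xi> i, i)) [1..<Suc k]))
               | S a k \<Gamma>. (a, k) \<in> inp T \<and> S \<subseteq> states T \<and> S \<noteq> {}
                   \<and> (\<forall>q\<in>S. \<Gamma> q \<noteq> {} \<and> \<Gamma> q \<subseteq> rhs_set T q a k)}
           \<union> {({}, a, k, Fun a (map (\<lambda>i. Var ({}, i)) [1..<Suc k])) | a k. (a, k) \<in> inp T},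
     init = {init T} \<rparr>"

definition accepts :: "('l, 'f, 'f) tdtt \<Rightarrow> 'l \<Rightarrow> 'f tree \<Rightarrow> bool" where
  "accepts A l s \<longleftrightarrow> produces A l s s"

text \<open>zeta' is obtained from xi by translating with p: some zeta derivable from p(xi) with
leaves q''(x_i) unrewritable equals zeta' with each (q'',p')(x_i) replaced by p'(q''(x_i)).\<close>
definition translates :: "('p, 'g, 'h) tdtt \<Rightarrow> 'p \<Rightarrow> ('g, 'q \<times> nat) trm \<Rightarrow> ('h, ('q \<times> 'p) \<times> nat) trm \<Rightarrow> bool" where
  "translates T' p \<xi> \<zeta>' \<longleftrightarrow>
     (step T')\<^sup>*\<^sup>* (Var (p, \<xi>)) (map_trm (\<lambda>x. x) (\<lambda>((q'', p'), i). (p', Var (q'', i))) \<zeta>')"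

definition product :: "('q, 'f, 'g) tdtt \<Rightarrow> ('p, 'g, 'h) tdtt \<Rightarrow> ('q \<times> 'p, 'f, 'h) tdtt" where
  "product T T' = \<lparr> states = states T \<times> states T', inp = inp T, outp = outp T',
     rules = {((q, p), a, k, \<zeta>') | q p a k \<xi> \<zeta>'.
                (q, a, k, \<xi>) \<in> rules T \<and> p \<in> states T' \<and> translates T' p \<xi> \<zeta>'},
     init = (init T, init T') \<rparr>"

text \<open>The underlying transducer reads symbols (a, [l_1,...,l_k]) of rank k.\<close>
record ('q, 'l, 'f, 'g) la_tdtt =
  la_trans :: "('q, 'f \<times> 'l list, 'g) tdtt"
  la_aut :: "('l, 'f, 'f) tdtt"

inductive relabel :: "('l, 'f, 'f) tdtt \<Rightarrow> 'f tree \<Rightarrow> ('f \<times> 'l list) tree \<Rightarrow> bool" for B where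
  "length ls = length ss \<Longrightarrow> list_all2 (relabel B) ss ss' \<Longrightarrow>
   (\<forall>i<length ss. ls ! i \<in> states B \<and> accepts B (ls ! i) (ss ! i)) \<Longrightarrow>
   relabel B (Node a ss) (Node (a, ls) ss')"

definition produces_la :: "('q, 'l, 'f, 'g) la_tdtt \<Rightarrow> 'q \<Rightarrow> 'f tree \<Rightarrow> 'g tree \<Rightarrow> bool" where
  "produces_la M q s r \<longleftrightarrow> (\<exists>s'. relabel (la_aut M) s s' \<and> produces (la_trans M) q s' r)"

definition T1hat :: "('q1, 'f, 'g) tdtt \<Rightarrow> ('q2, 'g, 'h) tdtt \<Rightarrow> ('q1 \<times> 'q2 set, 'f, 'g) tdtt" where
  "T1hat T1 T2 = product T1 (dom_aut T2)"

definition is_Mstate :: "('q \<times> 'p set) \<times> 'p \<Rightarrow> bool" where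
  "is_Mstate x \<longleftrightarrow> (case x of ((q, S), q') \<Rightarrow> q' \<in> S)"

definition constr_M :: "('q1, 'f, 'g) tdtt \<Rightarrow> ('q2, 'g, 'h) tdtt \<Rightarrow>
    (('q1 \<times> 'q2 set) \<times> 'q2, ('q1 \<times> 'q2 set) set, 'f, 'h) la_tdtt" where
  "constr_M T1 T2 = (let H = T1hat T1 T2; A = dom_aut H; N = product H T2 in
    \<lparr> la_trans = \<lparr> states = {x \<in> states N. is_Mstate x},
        inp = {((a, ls), k) | a ls k. (a, k) \<in> inp H \<and> length ls = k \<and> set ls \<subseteq> states A},
        outp = outp N,
        rules = {(((q, S), q'), (a, ls), k, \<gamma>) | q S q' a k \<xi> \<gamma> ls.
                   (((q, S), q'), a, k, \<gamma>) \<in> rules N \<and>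
                   is_Mstate ((q, S), q') \<and> (\<forall>(x, i) \<in> set2_trm \<gamma>. is_Mstate x) \<and>
                   ((q, S), a, k, \<xi>) \<in> rules H \<and> q' \<in> states T2 \<and> translates T2 q' \<xi> \<gamma> \<and>
                   length ls = k \<and> (\<forall>i<k. ls ! i \<in> states A \<and> vars_at \<xi> (Suc i) \<subseteq> ls ! i)},
        init = ((init T1, {init T2}), init T2) \<rparr>,
      la_aut = A \<rparr>)"

end

theory Submission
  imports Defs
begin

(* Rewriting is replaced by an equivalent big-step relation: q produces w on a(u_1,...,u_k) iff
   w is the right-hand side of a rule for q and a with every q'(x_i) replaced by an output of q'
   on u_i.

   A run of T1hat from (q, S) producing t is a run of T1 from q producing t such that every state
   in S has a run on t, and conversely: translating the right-hand side of a T1-rule, the domain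
   automaton of T2 passes to every leaf q''(x_i) a set S'' of T2-states that must have a run on
   the tree substituted for it, and choosing at each node all rules usable there makes every run
   of T2 from a state in S pass only through states of these sets.

   M labels the children of every input node with the sets of states of T1hat that have a run on
   them; these labels are accepted by the domain automaton of T1hat. Given runs of (q, S) and of
   q2 in S, the run of T2 on the T1hat-rule used at the root is a rule of M whose leaves
   (q'', S'', p')(x_i) satisfy p' in S'', and the induction hypothesis provides runs of M from
   these states on the children. *)

section \<open>Relational substitution\<close>

inductive subst_rel :: "('v \<Rightarrow> ('g, 'w) trm \<Rightarrow> bool) \<Rightarrow> ('g, 'v) trm \<Rightarrow> ('g, 'w) trm \<Rightarrow> bool"
  for E where
  VarI: "E v w \<Longrightarrow> subst_rel E (Var v) w"
| FunI: "list_all2 (subst_rel E) xs ws \<Longrightarrow> subst_rel E (Fun g xs) (Fun g ws)"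

lemma subst_rel_mono [mono]:
  assumes "\<And>v w. E v w \<longrightarrow> E' v w"
  shows "subst_rel E \<xi> w \<longrightarrow> subst_rel E' \<xi> w"
proof
  assume "subst_rel E \<xi> w"
  then show "subst_rel E' \<xi> w"
    by (induction rule: subst_rel.induct)
      (auto intro: subst_rel.intros assms[rule_format] elim!: list_all2_mono)
qed

inductive_simps subst_rel_simps: "subst_rel E (Var v) w" "subst_rel E (Fun g xs) w"

lemma subst_rel_cong_vars:
  assumes "subst_rel E \<xi> w" and "\<And>v w. v \<in> set2_trm \<xi> \<Longrightarrow> E v w \<Longrightarrow> E' v w"
  shows "subst_rel E' \<xi> w"
  using assms
proof (induction \<xi> arbitrary: w)
  case (Var x)
  then show ?case by (simp add: subst_rel_simps)
next
  case (Fun g xs)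
  then obtain ws where w: "w = Fun g ws" and args: "list_all2 (subst_rel E) xs ws"
    by (auto simp: subst_rel_simps)
  from args have "list_all2 (subst_rel E') xs ws"
  proof (rule list.rel_mono_strong)
    fix x w' assume x: "x \<in> set xs" and "subst_rel E x w'"
    show "subst_rel E' x w'"
    proof (rule Fun.IH[OF x \<open>subst_rel E x w'\<close>])
      fix v w assume "v \<in> set2_trm x" "E v w"
      then show "E' v w" using x by (intro Fun.prems(2)) auto
    qed
  qed
  then show ?case using w by (simp add: subst_rel_simps)
qed

lemma subst_rel_subst: "subst_rel E (subst \<sigma> \<xi>) w \<longleftrightarrow> subst_rel (\<lambda>v. subst_rel E (\<sigma> v)) \<xi> w"
proof (induction \<xi> arbitrary: w)
  case (Var x)
  then show ?case by (simp add: subst_rel_simps)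
next
  case (Fun g xs)
  have "list_all2 (subst_rel E) (map (subst \<sigma>) xs) ws \<longleftrightarrow>
      list_all2 (subst_rel (\<lambda>v. subst_rel E (\<sigma> v))) xs ws" for ws
    using Fun.IH by (auto simp: list_all2_conv_all_nth dest: nth_mem)
  then show ?case by (simp add: subst_rel_simps)
qed

lemma subst_rel_var: "subst_rel E \<xi> w \<Longrightarrow> v \<in> set2_trm \<xi> \<Longrightarrow> \<exists>w'. E v w'"
proof (induction rule: subst_rel.induct)
  case (FunI xs ws g)
  then obtain i where "i < length xs" "v \<in> set2_trm (xs ! i)" by (auto simp: in_set_conv_nth)
  with FunI.IH show ?case by (auto simp: list_all2_conv_all_nth)
qed auto

lemma set2_subst_rel:
  "subst_rel E \<xi> w \<Longrightarrow> y \<in> set2_trm w \<Longrightarrow> \<exists>v\<in>set2_trm \<xi>. \<exists>w'. E v w' \<and> y \<in> set2_trm w'"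
proof (induction rule: subst_rel.induct)
  case (FunI xs ws g)
  then obtain i where i: "i < length ws" "y \<in> set2_trm (ws ! i)" by (auto simp: in_set_conv_nth)
  with FunI.IH have "\<exists>v\<in>set2_trm (xs ! i). \<exists>w'. E v w' \<and> y \<in> set2_trm w'"
    by (auto simp: list_all2_conv_all_nth)
  moreover have "xs ! i \<in> set xs" using i FunI.IH by (simp add: list_all2_lengthD)
  ultimately show ?case by auto
qed auto

lemma to_trm_eq_iff [simp]: "to_trm t = (to_trm t' :: ('f, 'v) trm) \<longleftrightarrow> t = t'"
proof (induction t arbitrary: t')
  case (Node f ts)
  then show ?case by (cases t') (auto simp: list_eq_iff_nth_eq dest: nth_mem)
qed

lemma set2_to_trm [simp]: "set2_trm (to_trm t) = {}"
  by (induction t) auto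

lemma subst_rel_to_trm_Fun:
  "subst_rel E (Fun g xs) (to_trm t) \<longleftrightarrow>
    (\<exists>ts. t = Node g ts \<and> list_all2 (\<lambda>x t. subst_rel E x (to_trm t)) xs ts)"
  by (cases t) (auto simp: subst_rel_simps list_all2_map2)

(* The two occurrences of to_trm t may have different variable types, so this also converts
   between instances, e.g. to the type unit fixed in produces. *)
lemma subst_rel_to_trm_mono:
  assumes "subst_rel E \<xi> (to_trm t)"
    and "\<And>v t'. v \<in> set2_trm \<xi> \<Longrightarrow> E v (to_trm t') \<Longrightarrow> E' v (to_trm t')"
  shows "subst_rel E' \<xi> (to_trm t)"
  using assms
proof (induction \<xi> arbitrary: t)
  case (Var x)
  then show ?case by (auto simp: subst_rel_simps)
next
  case (Fun g xs)
  then obtain ts where t: "t = Node g ts" and args: "list_all2 (\<lambda>x t. subst_rel E x (to_trm t)) xs ts"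
    by (auto simp: subst_rel_to_trm_Fun)
  from args have "list_all2 (\<lambda>x t. subst_rel E' x (to_trm t)) xs ts"
  proof (rule list.rel_mono_strong)
    fix x t' assume x: "x \<in> set xs" and "subst_rel E x (to_trm t')"
    show "subst_rel E' x (to_trm t')"
    proof (rule Fun.IH[OF x \<open>subst_rel E x (to_trm t')\<close>])
      fix v t'' assume "v \<in> set2_trm x" "E v (to_trm t'')"
      then show "E' v (to_trm t'')" using x by (intro Fun.prems(2)) auto
    qed
  qed
  then show ?case using t by (simp add: subst_rel_simps list_all2_map2)
qed

lemma subst_rel_to_trm_var: "subst_rel E \<xi> (to_trm t) \<Longrightarrow> v \<in> set2_trm \<xi> \<Longrightarrow> \<exists>t'. E v (to_trm t')"
  by (drule subst_rel_to_trm_mono[where E' = "\<lambda>v w. E v w \<and> (\<exists>t'. w = to_trm t')"])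
    (auto dest: subst_rel_var)

lemma subst_rel_to_trm_exists:
  "(\<And>v. v \<in> set2_trm \<xi> \<Longrightarrow> \<exists>t. E v (to_trm t)) \<Longrightarrow> \<exists>t. subst_rel E \<xi> (to_trm t)"
proof (induction \<xi>)
  case (Var x)
  then show ?case by (auto simp: subst_rel_simps)
next
  case (Fun g xs)
  have "\<exists>t. subst_rel E x (to_trm t)" if "x \<in> set xs" for x
    by (rule Fun.IH[OF that], rule Fun.prems) (use that in auto)
  then have "\<forall>i<length xs. \<exists>t. subst_rel E (xs ! i) (to_trm t)"
    by simp
  then obtain ts where "length ts = length xs" "\<forall>i<length xs. subst_rel E (xs ! i) (to_trm (ts ! i))"
    by (auto simp: Skolem_list_nth)
  then have "subst_rel E (Fun g xs) (to_trm (Node g ts))"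
    by (simp add: subst_rel_simps list_all2_conv_all_nth)
  then show ?case ..
qed

lemma subst_rel_to_trm_factor:
  assumes "subst_rel E \<rho> (to_trm r)"
    and "\<And>v t. v \<in> set2_trm \<rho> \<Longrightarrow> E v (to_trm t) \<Longrightarrow>
      \<exists>\<gamma>. E1 v (map_trm (\<lambda>x. x) f \<gamma>) \<and> subst_rel E2 \<gamma> (to_trm t)"
  shows "\<exists>\<gamma>. subst_rel E1 \<rho> (map_trm (\<lambda>x. x) f \<gamma>) \<and> subst_rel E2 \<gamma> (to_trm r)"
  using assms
proof (induction \<rho> arbitrary: r)
  case (Var x)
  from Var.prems(1) have "E x (to_trm r)" by (simp add: subst_rel_simps)
  with Var.prems(2) show ?case by (auto simp: subst_rel_simps)
next
  case (Fun g xs)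
  then obtain ts where r: "r = Node g ts" and args: "list_all2 (\<lambda>x t. subst_rel E x (to_trm t)) xs ts"
    by (auto simp: subst_rel_to_trm_Fun)
  have "\<exists>\<gamma>. subst_rel E1 (xs ! i) (map_trm (\<lambda>x. x) f \<gamma>) \<and> subst_rel E2 \<gamma> (to_trm (ts ! i))"
    if i: "i < length xs" for i
  proof (rule Fun.IH)
    show "xs ! i \<in> set xs" using i by simp
    show "subst_rel E (xs ! i) (to_trm (ts ! i))" using args i by (auto simp: list_all2_conv_all_nth)
    show "\<exists>\<gamma>. E1 v (map_trm (\<lambda>x. x) f \<gamma>) \<and> subst_rel E2 \<gamma> (to_trm t)"
      if "v \<in> set2_trm (xs ! i)" "E v (to_trm t)" for v t
      using that i by (intro Fun.prems(2)) auto
  qed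
  then obtain \<gamma>s where "length \<gamma>s = length xs" and \<gamma>s: "\<forall>i<length xs.
      subst_rel E1 (xs ! i) (map_trm (\<lambda>x. x) f (\<gamma>s ! i)) \<and> subst_rel E2 (\<gamma>s ! i) (to_trm (ts ! i))"
    using Skolem_list_nth[where P = "\<lambda>i \<gamma>. subst_rel E1 (xs ! i) (map_trm (\<lambda>x. x) f \<gamma>)
      \<and> subst_rel E2 \<gamma> (to_trm (ts ! i))"] by blast
  with r args show ?case
    by (intro exI[of _ "Fun g \<gamma>s"]) (auto simp: subst_rel_simps list_all2_conv_all_nth)
qed

section \<open>Big-step semantics\<close>

(* Input variables are kept as leaves q(x), so that big_step also describes translations of
   right-hand sides. *)
inductive big_step :: "('q, 'f, 'g) tdtt \<Rightarrow> 'q \<Rightarrow> ('f, 'v) trm \<Rightarrow> ('g, 'q \<times> ('f, 'v) trm) trm \<Rightarrow> bool"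
  for T where
  VarI: "big_step T q (Var x) (Var (q, Var x))"
| FunI: "(q, a, length us, \<xi>) \<in> rules T \<Longrightarrow>
    subst_rel (\<lambda>v. big_step T (fst v) (us ! (snd v - 1))) \<xi> w \<Longrightarrow> big_step T q (Fun a us) w"

inductive_cases big_step_VarE: "big_step T q (Var x) w"
inductive_cases big_step_FunE: "big_step T q (Fun a us) w"

definition big_step_leaves ::
    "('q, 'f, 'g) tdtt \<Rightarrow> ('g, 'q \<times> ('f, 'v) trm) trm \<Rightarrow> ('g, 'q \<times> ('f, 'v) trm) trm \<Rightarrow> bool" where
  "big_step_leaves T = subst_rel (\<lambda>v. big_step T (fst v) (snd v))"

lemma step_big_step_leaves: "step T x y \<Longrightarrow> big_step_leaves T y w \<Longrightarrow> big_step_leaves T x w"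
proof (induction arbitrary: w rule: step.induct)
  case (root q a ss \<xi>)
  have "(\<lambda>v. subst_rel (\<lambda>v. big_step T (fst v) (snd v)) ((\<lambda>(q', i). Var (q', ss ! (i - 1))) v))
      = (\<lambda>v. big_step T (fst v) (ss ! (snd v - 1)))"
    by (auto simp: subst_rel_simps fun_eq_iff)
  with root show ?case
    unfolding big_step_leaves_def subst_rel_subst by (auto simp: subst_rel_simps intro: big_step.FunI)
next
  case (ctxt i us u' g)
  from ctxt.prems obtain ws where ws: "w = Fun g ws"
    "list_all2 (big_step_leaves T) (us[i := u']) ws"
    unfolding big_step_leaves_def by (auto simp: subst_rel_simps)
  with ctxt.IH ctxt.hyps have "list_all2 (big_step_leaves T) us ws"
    by (auto simp: list_all2_conv_all_nth nth_list_update split: if_splits)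
  with ws show ?case unfolding big_step_leaves_def by (simp add: subst_rel_simps)
qed

lemma steps_big_step_leaves: "(step T)\<^sup>*\<^sup>* x y \<Longrightarrow> big_step_leaves T y w \<Longrightarrow> big_step_leaves T x w"
  by (induction rule: converse_rtranclp_induct) (auto intro: step_big_step_leaves)

lemma big_step_leaves_refl: "\<forall>(q, u)\<in>set2_trm w. \<exists>x. u = Var x \<Longrightarrow> big_step_leaves T w w"
  unfolding big_step_leaves_def
proof (induction w)
  case (Var v)
  then show ?case by (auto simp: subst_rel_simps intro: big_step.VarI)
next
  case (Fun g xs)
  then show ?case by (auto simp: subst_rel_simps list_all2_conv_all_nth)
qed

lemma steps_imp_big_step:
  "(step T)\<^sup>*\<^sup>* (Var (q, u)) w \<Longrightarrow> \<forall>(q', u')\<in>set2_trm w. \<exists>x. u' = Var x \<Longrightarrow> big_step T q u w"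
  using steps_big_step_leaves[of T "Var (q, u)" w w] big_step_leaves_refl[of w T]
  by (simp add: big_step_leaves_def subst_rel_simps)

lemma steps_Fun_update:
  "(step T)\<^sup>*\<^sup>* x y \<Longrightarrow> i < length xs \<Longrightarrow> (step T)\<^sup>*\<^sup>* (Fun g (xs[i := x])) (Fun g (xs[i := y]))"
proof (induction rule: rtranclp_induct)
  case (step y z)
  have "step T (Fun g (xs[i := y])) (Fun g (xs[i := y, i := z]))"
    using step by (intro step.ctxt) auto
  with step show ?case by auto
qed simp

lemma steps_Fun_append:
  "list_all2 (step T)\<^sup>*\<^sup>* xs ys \<Longrightarrow> (step T)\<^sup>*\<^sup>* (Fun g (zs @ xs)) (Fun g (zs @ ys))"
proof (induction arbitrary: zs rule: list_all2_induct)
  case (Cons x xs y ys)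
  have "(step T)\<^sup>*\<^sup>* (Fun g (zs @ x # xs)) (Fun g (zs @ y # xs))"
    using steps_Fun_update[OF Cons.hyps(1), of "length zs" "zs @ x # xs" g] by simp
  also have "(step T)\<^sup>*\<^sup>* (Fun g (zs @ y # xs)) (Fun g (zs @ y # ys))"
    using Cons.IH[of "zs @ [y]"] by simp
  finally show ?case .
qed simp

lemma steps_Fun: "list_all2 (step T)\<^sup>*\<^sup>* xs ys \<Longrightarrow> (step T)\<^sup>*\<^sup>* (Fun g xs) (Fun g ys)"
  using steps_Fun_append[of T xs ys g "[]"] by simp

lemma subst_rel_steps_subst: "subst_rel (\<lambda>v. (step T)\<^sup>*\<^sup>* (\<sigma> v)) \<xi> w \<Longrightarrow> (step T)\<^sup>*\<^sup>* (subst \<sigma> \<xi>) w"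
proof (induction \<xi> arbitrary: w)
  case (Var x)
  then show ?case by (simp add: subst_rel_simps)
next
  case (Fun g xs)
  then obtain ws where ws: "w = Fun g ws" "list_all2 (subst_rel (\<lambda>v. (step T)\<^sup>*\<^sup>* (\<sigma> v))) xs ws"
    by (auto simp: subst_rel_simps)
  with Fun.IH have "list_all2 (step T)\<^sup>*\<^sup>* (map (subst \<sigma>) xs) ws"
    by (auto simp: list_all2_conv_all_nth dest: nth_mem)
  with ws show ?case by (simp add: steps_Fun)
qed

lemma big_step_imp_steps: "big_step T q u w \<Longrightarrow> (step T)\<^sup>*\<^sup>* (Var (q, u)) w"
proof (induction rule: big_step.induct)
  case (FunI q a us \<xi> w)
  have "step T (Var (q, Fun a us)) (subst (\<lambda>(q', i). Var (q', us ! (i - 1))) \<xi>)"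
    using FunI.hyps(1) by (rule step.root)
  moreover have "(step T)\<^sup>*\<^sup>* (subst (\<lambda>(q', i). Var (q', us ! (i - 1))) \<xi>) w"
    by (rule subst_rel_steps_subst, rule subst_rel_cong_vars[OF FunI.IH]) auto
  ultimately show ?case by (rule converse_rtranclp_into_rtranclp)
qed simp

abbreviation nest_states :: "('h, ('q \<times> 'p) \<times> nat) trm \<Rightarrow> ('h, 'p \<times> ('g, 'q \<times> nat) trm) trm" where
  "nest_states \<zeta> \<equiv> map_trm (\<lambda>x. x) (\<lambda>((q, p), i). (p, Var (q, i))) \<zeta>"

lemma translates_iff_big_step: "translates T p \<xi> \<zeta> \<longleftrightarrow> big_step T p \<xi> (nest_states \<zeta>)"
  unfolding translates_def
  by (auto simp: trm.set_map intro: big_step_imp_steps elim!: steps_imp_big_step)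

lemma produces_iff_big_step:
  "produces T q s t \<longleftrightarrow> big_step T q (to_trm s :: ('f, unit) trm) (to_trm t)"
  unfolding produces_def by (auto intro: big_step_imp_steps steps_imp_big_step)

definition rhs_vars_wf :: "('q, 'f, 'g) tdtt \<Rightarrow> bool" where
  "rhs_vars_wf T \<longleftrightarrow> (\<forall>(q, a, k, \<xi>)\<in>rules T. \<forall>(q', i)\<in>set2_trm \<xi>. q' \<in> states T \<and> 1 \<le> i \<and> i \<le> k)"

lemma rhs_vars_wfD:
  "rhs_vars_wf T \<Longrightarrow> (q, a, k, \<xi>) \<in> rules T \<Longrightarrow> (q', i) \<in> set2_trm \<xi> \<Longrightarrow> q' \<in> states T \<and> 1 \<le> i \<and> i \<le> k"
  unfolding rhs_vars_wf_def by fastforce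

lemma wf_rhs_set2: "wf_rhs \<Delta> Q k \<xi> \<Longrightarrow> (q, i) \<in> set2_trm \<xi> \<Longrightarrow> q \<in> Q \<and> 1 \<le> i \<and> i \<le> k"
  by (induction \<Delta> Q k \<xi> rule: wf_rhs.induct) auto

lemma wf_tdtt_rhs_vars_wf: "wf_tdtt T \<Longrightarrow> rhs_vars_wf T"
  unfolding wf_tdtt_def rhs_vars_wf_def by (fastforce dest: wf_rhs_set2)

lemma big_step_set2:
  assumes "rhs_vars_wf T"
  shows "big_step T p u w \<Longrightarrow> p \<in> states T \<Longrightarrow> (p', x) \<in> set2_trm w \<Longrightarrow>
    p' \<in> states T \<and> (\<forall>z. x = Var z \<longrightarrow> z \<in> set2_trm u)"
proof (induction rule: big_step.induct)
  case (FunI q a us \<xi> w)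
  from set2_subst_rel[OF FunI.IH FunI.prems(2)] obtain q' i w' where v: "(q', i) \<in> set2_trm \<xi>"
    and "big_step T q' (us ! (i - 1)) w'"
    and IH: "q' \<in> states T \<longrightarrow> (p', x) \<in> set2_trm w' \<longrightarrow>
      p' \<in> states T \<and> (\<forall>z. x = Var z \<longrightarrow> z \<in> set2_trm (us ! (i - 1)))"
    and "(p', x) \<in> set2_trm w'"
    by auto
  moreover from rhs_vars_wfD[OF assms FunI.hyps(1) v] have "q' \<in> states T" "us ! (i - 1) \<in> set us"
    by auto
  ultimately show ?case by auto
qed auto

fun child_output :: "('q, 'f, 'g) tdtt \<Rightarrow> 'f tree list \<Rightarrow> 'q \<times> nat \<Rightarrow> ('g, 'w) trm \<Rightarrow> bool" where
  "child_output T ts (q, i) w \<longleftrightarrow>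
     (\<exists>t. w = to_trm t \<and> 1 \<le> i \<and> i \<le> length ts \<and> q \<in> states T \<and> produces T q (ts ! (i - 1)) t)"

lemma produces_NodeI:
  assumes "(q, a, length ss, \<xi>) \<in> rules T" and "subst_rel (child_output T ss) \<xi> (to_trm t)"
  shows "produces T q (Node a ss) t"
proof -
  have "subst_rel (\<lambda>v. big_step T (fst v) (map to_trm ss ! (snd v - 1))) \<xi>
      (to_trm t :: (_, _ \<times> (_, unit) trm) trm)"
    by (rule subst_rel_to_trm_mono[OF assms(2)]) (auto simp: produces_iff_big_step)
  with assms(1) show ?thesis
    unfolding produces_iff_big_step by (auto intro: big_step.FunI)
qed

lemma produces_NodeE:
  assumes "rhs_vars_wf T" and "produces T q (Node a ss) t"
  obtains \<xi> where "(q, a, length ss, \<xi>) \<in> rules T" and "subst_rel (child_output T ss) \<xi> (to_trm t)"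
proof -
  from assms(2) obtain \<xi> where rule: "(q, a, length ss, \<xi>) \<in> rules T"
    and runs: "subst_rel (\<lambda>v. big_step T (fst v) (map to_trm ss ! (snd v - 1))) \<xi>
      (to_trm t :: (_, _ \<times> (_, unit) trm) trm)"
    unfolding produces_iff_big_step by (auto elim: big_step_FunE)
  from runs have "subst_rel (child_output T ss) \<xi> (to_trm t)"
  proof (rule subst_rel_to_trm_mono)
    fix v t' assume v: "v \<in> set2_trm \<xi>"
      and run: "big_step T (fst v) (map to_trm ss ! (snd v - 1)) (to_trm t' :: (_, _ \<times> (_, unit) trm) trm)"
    obtain q' i where [simp]: "v = (q', i)" by fastforce
    from rhs_vars_wfD[OF assms(1) rule] v have "q' \<in> states T" "1 \<le> i" "i \<le> length ss" by auto
    with run show "child_output T ss v (to_trm t')" by (simp add: produces_iff_big_step)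
  qed
  with rule show thesis by (rule that)
qed

lemma subst_rel_to_trm_ranked:
  assumes "subst_rel E \<xi> (to_trm t)" and "wf_rhs \<Delta> Q k \<xi>"
    and "\<And>v t'. v \<in> set2_trm \<xi> \<Longrightarrow> E v (to_trm t') \<Longrightarrow> ranked \<Delta> t'"
  shows "ranked \<Delta> t"
  using assms
proof (induction \<xi> arbitrary: t)
  case (Var v)
  then show ?case by (cases v) (auto simp: subst_rel_simps)
next
  case (Fun g xs)
  then obtain ts where t: "t = Node g ts" and args: "list_all2 (\<lambda>x t. subst_rel E x (to_trm t)) xs ts"
    by (auto simp: subst_rel_to_trm_Fun)
  have "ranked \<Delta> (ts ! i)" if i: "i < length ts" for i
  proof (rule Fun.IH)
    show "xs ! i \<in> set xs" "subst_rel E (xs ! i) (to_trm (ts ! i))"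
      using args i by (auto simp: list_all2_conv_all_nth)
    then show "wf_rhs \<Delta> Q k (xs ! i)" using Fun.prems(2) by simp
    show "ranked \<Delta> t'" if "v \<in> set2_trm (xs ! i)" "E v (to_trm t')" for v t'
      using that \<open>xs ! i \<in> set xs\<close> by (intro Fun.prems(3)) auto
  qed
  with t args Fun.prems(2) show ?case by (auto simp: list_all2_conv_all_nth in_set_conv_nth)
qed

lemma produces_ranked: "wf_tdtt T \<Longrightarrow> produces T q s t \<Longrightarrow> ranked (outp T) t"
proof (induction s arbitrary: q t)
  case (Node a ss)
  from Node.prems obtain \<xi> where rule: "(q, a, length ss, \<xi>) \<in> rules T"
    and args: "subst_rel (child_output T ss) \<xi> (to_trm t)"
    by (auto elim: produces_NodeE[OF wf_tdtt_rhs_vars_wf])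
  from rule Node.prems(1) have "wf_rhs (outp T) (states T) (length ss) \<xi>"
    unfolding wf_tdtt_def by fastforce
  with args show ?case
  proof (rule subst_rel_to_trm_ranked)
    fix v t' assume "child_output T ss v (to_trm t')"
    then obtain q' i where "1 \<le> i" "i \<le> length ss" "produces T q' (ss ! (i - 1)) t'"
      by (cases v) auto
    with Node.IH[of "ss ! (i - 1)"] Node.prems(1) show "ranked (outp T) t'" by auto
  qed
qed

definition dom_states :: "('q, 'f, 'g) tdtt \<Rightarrow> 'f tree \<Rightarrow> 'q set" where
  "dom_states T t = {q. \<exists>r. produces T q t r}"

lemma dom_states_set2_child_output:
  assumes "subst_rel (child_output T ts) \<xi> (to_trm r)" and "(q, j) \<in> set2_trm \<xi>"
  shows "q \<in> dom_states T (ts ! (j - 1))"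
  using subst_rel_to_trm_var[OF assms] by (auto simp: dom_states_def)

lemma dom_states_NodeI:
  assumes "rhs_vars_wf T" and "(q, g, length ts, \<xi>) \<in> rules T"
    and "\<And>q' j. (q', j) \<in> set2_trm \<xi> \<Longrightarrow> q' \<in> dom_states T (ts ! (j - 1))"
  shows "q \<in> dom_states T (Node g ts)"
proof -
  have "\<exists>t'. child_output T ts v (to_trm t' :: (_, unit) trm)" if v: "v \<in> set2_trm \<xi>" for v
  proof -
    obtain q' j where [simp]: "v = (q', j)" by fastforce
    from v rhs_vars_wfD[OF assms(1,2)] assms(3) show ?thesis by (auto simp: dom_states_def)
  qed
  then obtain r where "subst_rel (child_output T ts) \<xi> (to_trm r :: (_, unit) trm)"
    using subst_rel_to_trm_exists by blast
  with assms(2) show ?thesis unfolding dom_states_def by (blast intro: produces_NodeI)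
qed

lemma translates_FunI:
  assumes "(p, g, length ts, \<rho>) \<in> rules T" and "length \<zeta>s = length ts"
    and "subst_rel (child_output T ts) \<rho> (to_trm r)"
    and "\<And>q j t. (q, j) \<in> set2_trm \<rho> \<Longrightarrow> 1 \<le> j \<Longrightarrow> j \<le> length ts \<Longrightarrow> produces T q (ts ! (j - 1)) t \<Longrightarrow>
      \<exists>\<gamma>. translates T q (\<zeta>s ! (j - 1)) \<gamma> \<and> subst_rel E \<gamma> (to_trm t)"
  shows "\<exists>\<gamma>. translates T p (Fun g \<zeta>s) \<gamma> \<and> subst_rel E \<gamma> (to_trm r)"
proof -
  have "\<exists>\<gamma>. subst_rel (\<lambda>v. big_step T (fst v) (\<zeta>s ! (snd v - 1))) \<rho> (nest_states \<gamma>)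
      \<and> subst_rel E \<gamma> (to_trm r)"
  proof (rule subst_rel_to_trm_factor[OF assms(3)])
    fix v t assume "v \<in> set2_trm \<rho>" "child_output T ts v (to_trm t)"
    moreover obtain q j where "v = (q, j)" by fastforce
    ultimately show "\<exists>\<gamma>. big_step T (fst v) (\<zeta>s ! (snd v - 1)) (nest_states \<gamma>) \<and> subst_rel E \<gamma> (to_trm t)"
      using assms(4) by (auto simp: translates_iff_big_step)
  qed
  moreover from assms(1,2) have "(p, g, length \<zeta>s, \<rho>) \<in> rules T" by simp
  ultimately show ?thesis unfolding translates_iff_big_step by (blast intro: big_step.FunI)
qed

section \<open>The domain automaton\<close>

definition dom_rhs :: "'f \<Rightarrow> nat \<Rightarrow> (nat \<Rightarrow> 'l) \<Rightarrow> ('f, 'l \<times> nat) trm" where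
  "dom_rhs a k L = Fun a (map (\<lambda>i. Var (L i, i)) [1..<Suc k])"

lemma states_dom_aut [simp]: "states (dom_aut T) = Pow (states T)"
  and inp_dom_aut [simp]: "inp (dom_aut T) = inp T"
  by (auto simp: dom_aut_def)

lemma dom_aut_ruleI:
  assumes "(a, k) \<in> inp T" and "S \<subseteq> states T"
    and "\<And>q. q \<in> S \<Longrightarrow> \<Gamma> q \<noteq> {} \<and> \<Gamma> q \<subseteq> rhs_set T q a k"
  shows "(S, a, k, dom_rhs a k (\<lambda>i. \<Union>q\<in>S. \<Union>\<xi>\<in>\<Gamma> q. vars_at \<xi> i)) \<in> rules (dom_aut T)"
proof (cases "S = {}")
  case True
  with assms(1) show ?thesis by (auto simp: dom_aut_def dom_rhs_def)
next
  case False
  with assms show ?thesis unfolding dom_aut_def dom_rhs_def by simp blast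
qed

lemma dom_aut_ruleE:
  assumes "(S, a, k, \<rho>) \<in> rules (dom_aut T)"
  obtains \<Gamma> where "\<rho> = dom_rhs a k (\<lambda>i. \<Union>q\<in>S. \<Union>\<xi>\<in>\<Gamma> q. vars_at \<xi> i)"
    and "(a, k) \<in> inp T" and "S \<subseteq> states T"
    and "\<And>q. q \<in> S \<Longrightarrow> \<Gamma> q \<noteq> {} \<and> \<Gamma> q \<subseteq> rhs_set T q a k"
proof -
  from assms consider
    (nonempty) \<Gamma> where "\<rho> = dom_rhs a k (\<lambda>i. \<Union>q\<in>S. \<Union>\<xi>\<in>\<Gamma> q. vars_at \<xi> i)"
      "(a, k) \<in> inp T" "S \<subseteq> states T" "\<forall>q\<in>S. \<Gamma> q \<noteq> {} \<and> \<Gamma> q \<subseteq> rhs_set T q a k"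
  | (empty) "S = {}" "\<rho> = dom_rhs a k (\<lambda>i. {})" "(a, k) \<in> inp T"
    unfolding dom_aut_def dom_rhs_def by (auto simp del: upt_Suc)
  then show thesis
  proof cases
    case nonempty
    then show ?thesis by (intro that) auto
  next
    case empty
    then show ?thesis by (intro that[of "\<lambda>_. {}"]) auto
  qed
qed

lemma subst_rel_dom_rhs:
  "subst_rel E (dom_rhs a k L) w \<longleftrightarrow>
    (\<exists>ws. w = Fun a ws \<and> length ws = k \<and> (\<forall>j<k. E (L (Suc j), Suc j) (ws ! j)))"
  unfolding dom_rhs_def by (auto simp del: upt_Suc simp: subst_rel_simps list_all2_conv_all_nth)

lemma rhs_vars_wf_dom_aut:
  assumes "rhs_vars_wf T"
  shows "rhs_vars_wf (dom_aut T)"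
  unfolding rhs_vars_wf_def
proof clarify
  fix S a k \<rho> L i
  assume rule: "(S, a, k, \<rho>) \<in> rules (dom_aut T)" and var: "(L, i) \<in> set2_trm \<rho>"
  from rule obtain \<Gamma> where \<rho>: "\<rho> = dom_rhs a k (\<lambda>i. \<Union>q\<in>S. \<Union>\<xi>\<in>\<Gamma> q. vars_at \<xi> i)"
    and \<Gamma>: "\<And>q. q \<in> S \<Longrightarrow> \<Gamma> q \<noteq> {} \<and> \<Gamma> q \<subseteq> rhs_set T q a k"
    using dom_aut_ruleE[OF rule] by metis
  from var \<rho> have "1 \<le> i" "i \<le> k" "L = (\<Union>q\<in>S. \<Union>\<xi>\<in>\<Gamma> q. vars_at \<xi> i)"
    by (auto simp: dom_rhs_def simp del: upt_Suc)
  moreover have "vars_at \<xi> i \<subseteq> states T" if "q \<in> S" "\<xi> \<in> \<Gamma> q" for q \<xi>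
    using \<Gamma>[OF that(1)] that(2) rhs_vars_wfD[OF assms] by (auto simp: rhs_set_def vars_at_def)
  ultimately show "L \<in> states (dom_aut T) \<and> 1 \<le> i \<and> i \<le> k" by auto
qed

lemma dom_aut_rule_dom_states:
  assumes "rhs_vars_wf T" and "(g, length ts) \<in> inp T" and "S \<subseteq> states T \<inter> dom_states T (Node g ts)"
  obtains L where "(S, g, length ts, dom_rhs g (length ts) L) \<in> rules (dom_aut T)"
    and "\<And>j. j < length ts \<Longrightarrow> L (Suc j) \<subseteq> states T \<inter> dom_states T (ts ! j)"
    and "\<And>q r. q \<in> S \<Longrightarrow> produces T q (Node g ts) r \<Longrightarrow>
      \<exists>\<xi>. (q, g, length ts, \<xi>) \<in> rules T \<and> subst_rel (child_output T ts) \<xi> (to_trm r :: (_, unit) trm)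
        \<and> (\<forall>j. vars_at \<xi> j \<subseteq> L j)"
proof -
  (* Taking for each q all rules usable on Node g ts makes L j contain every state that a run
     from S applies to the j-th child. *)
  define \<Gamma> where "\<Gamma> q = {\<xi>. (q, g, length ts, \<xi>) \<in> rules T
    \<and> (\<forall>(q', j)\<in>set2_trm \<xi>. q' \<in> dom_states T (ts ! (j - 1)))}" for q
  define L where "L i = (\<Union>q\<in>S. \<Union>\<xi>\<in>\<Gamma> q. vars_at \<xi> i)" for i
  have used: "\<xi> \<in> \<Gamma> q" if "(q, g, length ts, \<xi>) \<in> rules T"
    and "subst_rel (child_output T ts) \<xi> (to_trm r)" for q \<xi> r
    using that unfolding \<Gamma>_def by (auto dest: dom_states_set2_child_output)
  have \<Gamma>: "\<Gamma> q \<noteq> {} \<and> \<Gamma> q \<subseteq> rhs_set T q g (length ts)" if q: "q \<in> S" for q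
  proof
    from q assms(3) obtain r where "produces T q (Node g ts) r" by (auto simp: dom_states_def)
    then obtain \<xi> where "(q, g, length ts, \<xi>) \<in> rules T" "subst_rel (child_output T ts) \<xi> (to_trm r)"
      by (rule produces_NodeE[OF assms(1)])
    then show "\<Gamma> q \<noteq> {}" using used by blast
    show "\<Gamma> q \<subseteq> rhs_set T q g (length ts)" by (auto simp: \<Gamma>_def rhs_set_def)
  qed
  have "(S, g, length ts, dom_rhs g (length ts) L) \<in> rules (dom_aut T)"
    unfolding L_def by (rule dom_aut_ruleI[OF assms(2)]) (use assms(3) \<Gamma> in auto)
  moreover have "L (Suc j) \<subseteq> states T \<inter> dom_states T (ts ! j)" for j
    using rhs_vars_wfD[OF assms(1)] unfolding L_def \<Gamma>_def vars_at_def by fastforce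
  moreover have "\<exists>\<xi>. (q, g, length ts, \<xi>) \<in> rules T
      \<and> subst_rel (child_output T ts) \<xi> (to_trm r :: (_, unit) trm) \<and> (\<forall>j. vars_at \<xi> j \<subseteq> L j)"
    if q: "q \<in> S" and run: "produces T q (Node g ts) r" for q r
  proof -
    obtain \<xi> where rule: "(q, g, length ts, \<xi>) \<in> rules T"
      and args: "subst_rel (child_output T ts) \<xi> (to_trm r :: (_, unit) trm)"
      by (rule produces_NodeE[OF assms(1) run])
    have "vars_at \<xi> j \<subseteq> L j" for j
      using used[OF rule args] q unfolding L_def by blast
    with rule args show ?thesis by blast
  qed
  ultimately show thesis by (rule that)
qed

lemma dom_aut_accepts:
  assumes "rhs_vars_wf T"
  shows "ranked (inp T) u \<Longrightarrow> S \<subseteq> states T \<inter> dom_states T u \<Longrightarrow> accepts (dom_aut T) S u"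
proof (induction u arbitrary: S)
  case (Node a us)
  then have "(a, length us) \<in> inp T" by simp
  then obtain L where rule: "(S, a, length us, dom_rhs a (length us) L) \<in> rules (dom_aut T)"
    and L: "\<And>j. j < length us \<Longrightarrow> L (Suc j) \<subseteq> states T \<inter> dom_states T (us ! j)"
    by (rule dom_aut_rule_dom_states[OF assms _ Node.prems(2)]) blast+
  have "accepts (dom_aut T) (L (Suc j)) (us ! j)" if "j < length us" for j
    using that Node.prems(1) L by (intro Node.IH) auto
  with L have "subst_rel (child_output (dom_aut T) us) (dom_rhs a (length us) L) (to_trm (Node a us))"
    by (auto simp: subst_rel_dom_rhs accepts_def)
  with rule show ?case unfolding accepts_def by (rule produces_NodeI)
qed

(* E instantiates the variables q(x_i) of a rule of T1; dom_annotated and comp_output lift it to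
   the variables (q, S)(x_i) of T1hat and ((q, S), p)(x_i) of M. *)
fun dom_annotated ::
    "('p, 'g, 'h) tdtt \<Rightarrow> ('q \<times> nat \<Rightarrow> ('g, 'w) trm \<Rightarrow> bool) \<Rightarrow> ('q \<times> 'p set) \<times> nat \<Rightarrow> ('g, 'w) trm \<Rightarrow> bool"
  where
  "dom_annotated T E ((q, S), i) w \<longleftrightarrow>
     (\<exists>t. w = to_trm t \<and> E (q, i) w \<and> ranked (inp T) t \<and> S \<subseteq> states T \<inter> dom_states T t)"

fun comp_output ::
    "('p, 'g, 'h) tdtt \<Rightarrow> ('q \<times> nat \<Rightarrow> ('g, 'w) trm \<Rightarrow> bool) \<Rightarrow> (('q \<times> 'p set) \<times> 'p) \<times> nat \<Rightarrow> ('h, 'w) trm \<Rightarrow> bool"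
  where
  "comp_output T E (((q, S), p), i) w \<longleftrightarrow>
     (\<exists>t r. w = to_trm r \<and> dom_annotated T E ((q, S), i) (to_trm t) \<and> p \<in> S \<and> produces T p t r)"

lemma dom_aut_translation_sound:
  assumes "rhs_vars_wf T"
  shows "translates (dom_aut T) S \<xi> \<zeta> \<Longrightarrow> subst_rel (dom_annotated T E) \<zeta> (to_trm t) \<Longrightarrow>
    subst_rel E \<xi> (to_trm t) \<and> S \<subseteq> dom_states T t"
  unfolding translates_iff_big_step
proof (induction \<xi> arbitrary: S \<zeta> t)
  case (Var x)
  from Var.prems(1) obtain q i where "\<zeta> = Var ((q, S), i)" "x = (q, i)"
    by (cases \<zeta>) (auto elim: big_step_VarE)
  with Var.prems(2) show ?case by (auto simp: subst_rel_simps)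
next
  case (Fun g xs)
  from Fun.prems(1) obtain \<rho> where rule: "(S, g, length xs, \<rho>) \<in> rules (dom_aut T)"
    and runs: "subst_rel (\<lambda>v. big_step (dom_aut T) (fst v) (xs ! (snd v - 1))) \<rho> (nest_states \<zeta>)"
    by (auto elim: big_step_FunE)
  from rule obtain \<Gamma> where \<rho>: "\<rho> = dom_rhs g (length xs) (\<lambda>i. \<Union>q\<in>S. \<Union>\<xi>\<in>\<Gamma> q. vars_at \<xi> i)"
    and \<Gamma>: "\<And>q. q \<in> S \<Longrightarrow> \<Gamma> q \<noteq> {} \<and> \<Gamma> q \<subseteq> rhs_set T q g (length xs)"
    using dom_aut_ruleE by metis
  define L where "L i = (\<Union>q\<in>S. \<Union>\<xi>\<in>\<Gamma> q. vars_at \<xi> i)" for i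
  from runs obtain \<zeta>s where \<zeta>: "\<zeta> = Fun g \<zeta>s" and "length \<zeta>s = length xs"
    and child_runs: "\<And>j. j < length xs \<Longrightarrow> big_step (dom_aut T) (L (Suc j)) (xs ! j) (nest_states (\<zeta>s ! j))"
    unfolding \<rho> L_def[symmetric] subst_rel_dom_rhs by (cases \<zeta>) auto
  with Fun.prems(2) obtain ts where t: "t = Node g ts" and "length ts = length xs"
    and child_annots: "\<And>j. j < length xs \<Longrightarrow> subst_rel (dom_annotated T E) (\<zeta>s ! j) (to_trm (ts ! j))"
    by (auto simp: subst_rel_to_trm_Fun list_all2_conv_all_nth)
  have IH: "subst_rel E (xs ! j) (to_trm (ts ! j)) \<and> L (Suc j) \<subseteq> dom_states T (ts ! j)"
    if "j < length xs" for j
    using that child_runs child_annots by (intro Fun.IH) auto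
  then have "subst_rel E (Fun g xs) (to_trm t)"
    using t \<open>length ts = length xs\<close> by (auto simp: subst_rel_simps list_all2_conv_all_nth)
  moreover have "q \<in> dom_states T t" if q: "q \<in> S" for q
  proof -
    from \<Gamma>[OF q] obtain \<xi> where "\<xi> \<in> \<Gamma> q" and rule: "(q, g, length ts, \<xi>) \<in> rules T"
      using \<open>length ts = length xs\<close> by (auto simp: rhs_set_def)
    have "q' \<in> dom_states T (ts ! (j - 1))" if "(q', j) \<in> set2_trm \<xi>" for q' j
    proof -
      from rhs_vars_wfD[OF assms rule that] have "1 \<le> j" "j \<le> length ts" by auto
      moreover from that q \<open>\<xi> \<in> \<Gamma> q\<close> have "q' \<in> L (Suc (j - 1))"
        using \<open>1 \<le> j\<close> unfolding L_def vars_at_def by auto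
      moreover have "j - 1 < length xs" using \<open>1 \<le> j\<close> \<open>j \<le> length ts\<close> \<open>length ts = length xs\<close> by simp
      ultimately show ?thesis using IH by blast
    qed
    with assms rule show ?thesis unfolding t by (rule dom_states_NodeI)
  qed
  ultimately show ?case by blast
qed

definition dom_aut_translation ::
    "('p, 'g, 'h) tdtt \<Rightarrow> ('q \<times> nat \<Rightarrow> ('g, unit) trm \<Rightarrow> bool) \<Rightarrow> 'p set \<Rightarrow> ('g, 'q \<times> nat) trm \<Rightarrow>
      'g tree \<Rightarrow> ('g, ('q \<times> 'p set) \<times> nat) trm \<Rightarrow> bool" where
  "dom_aut_translation T E S \<xi> t \<zeta> \<longleftrightarrow> translates (dom_aut T) S \<xi> \<zeta>
    \<and> subst_rel (dom_annotated T E) \<zeta> (to_trm t)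
    \<and> (\<forall>p r. p \<in> S \<longrightarrow> produces T p t r \<longrightarrow>
        (\<exists>\<gamma>. translates T p \<zeta> \<gamma> \<and> subst_rel (comp_output T E) \<gamma> (to_trm r)))"

lemma dom_aut_translation_Fun:
  assumes "(S, g, length ts, dom_rhs g (length ts) L) \<in> rules (dom_aut T)"
    and "\<And>p r. p \<in> S \<Longrightarrow> produces T p (Node g ts) r \<Longrightarrow>
      \<exists>\<rho>. (p, g, length ts, \<rho>) \<in> rules T \<and> subst_rel (child_output T ts) \<rho> (to_trm r :: (_, unit) trm)
        \<and> (\<forall>j. vars_at \<rho> j \<subseteq> L j)"
    and "length xs = length ts" and "length \<zeta>s = length ts"
    and "\<And>j. j < length ts \<Longrightarrow> dom_aut_translation T E (L (Suc j)) (xs ! j) (ts ! j) (\<zeta>s ! j)"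
  shows "dom_aut_translation T E S (Fun g xs) (Node g ts) (Fun g \<zeta>s)"
  unfolding dom_aut_translation_def
proof (intro conjI allI impI)
  have "big_step (dom_aut T) S (Fun g xs) (nest_states (Fun g \<zeta>s))"
  proof (rule big_step.FunI)
    show "(S, g, length xs, dom_rhs g (length ts) L) \<in> rules (dom_aut T)"
      using assms(1,3) by simp
    show "subst_rel (\<lambda>v. big_step (dom_aut T) (fst v) (xs ! (snd v - 1))) (dom_rhs g (length ts) L)
        (nest_states (Fun g \<zeta>s))"
      using assms(3-5) by (auto simp: subst_rel_dom_rhs dom_aut_translation_def translates_iff_big_step)
  qed
  then show "translates (dom_aut T) S (Fun g xs) (Fun g \<zeta>s)"
    by (simp add: translates_iff_big_step)
  show "subst_rel (dom_annotated T E) (Fun g \<zeta>s) (to_trm (Node g ts))"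
    using assms(4,5) by (auto simp: subst_rel_simps list_all2_conv_all_nth dom_aut_translation_def)
  fix p r assume "p \<in> S" "produces T p (Node g ts) r"
  with assms(2) obtain \<rho> where rule: "(p, g, length ts, \<rho>) \<in> rules T"
    and args: "subst_rel (child_output T ts) \<rho> (to_trm r :: (_, unit) trm)"
    and vars: "\<And>j. vars_at \<rho> j \<subseteq> L j"
    by blast
  show "\<exists>\<gamma>. translates T p (Fun g \<zeta>s) \<gamma> \<and> subst_rel (comp_output T E) \<gamma> (to_trm r)"
  proof (rule translates_FunI[OF rule assms(4) args])
    fix q j t' assume "(q, j) \<in> set2_trm \<rho>" "1 \<le> j" "j \<le> length ts" "produces T q (ts ! (j - 1)) t'"
    moreover have "q \<in> L (Suc (j - 1))"
      using vars \<open>(q, j) \<in> set2_trm \<rho>\<close> \<open>1 \<le> j\<close> by (auto simp: vars_at_def)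
    moreover have "dom_aut_translation T E (L (Suc (j - 1))) (xs ! (j - 1)) (ts ! (j - 1)) (\<zeta>s ! (j - 1))"
      using assms(5)[of "j - 1"] \<open>1 \<le> j\<close> \<open>j \<le> length ts\<close> by simp
    ultimately show "\<exists>\<gamma>. translates T q (\<zeta>s ! (j - 1)) \<gamma> \<and> subst_rel (comp_output T E) \<gamma> (to_trm t')"
      unfolding dom_aut_translation_def by blast
  qed
qed

lemma dom_aut_translation_complete:
  assumes "rhs_vars_wf T"
  shows "subst_rel E \<xi> (to_trm t) \<Longrightarrow> ranked (inp T) t \<Longrightarrow> S \<subseteq> states T \<inter> dom_states T t \<Longrightarrow>
    \<exists>\<zeta>. dom_aut_translation T E S \<xi> t \<zeta>"
proof (induction \<xi> arbitrary: S t)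
  case (Var x)
  obtain q i where x: "x = (q, i)" by fastforce
  from Var.prems(1) have "E x (to_trm t)" by (simp add: subst_rel_simps)
  with Var.prems x have "dom_aut_translation T E S (Var x) t (Var ((q, S), i))"
    unfolding dom_aut_translation_def
    by (auto simp: translates_iff_big_step subst_rel_simps intro!: exI[of _ "Var (((q, S), _), i)"]
        intro: big_step.VarI)
  then show ?case ..
next
  case (Fun g xs)
  from Fun.prems(1) obtain ts where t: "t = Node g ts" and len: "length xs = length ts"
    and args: "\<And>j. j < length ts \<Longrightarrow> subst_rel E (xs ! j) (to_trm (ts ! j))"
    by (auto simp: subst_rel_to_trm_Fun list_all2_conv_all_nth)
  with Fun.prems(2) have inp: "(g, length ts) \<in> inp T"
    and ranked: "\<And>j. j < length ts \<Longrightarrow> ranked (inp T) (ts ! j)"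
    by auto
  obtain L where rule: "(S, g, length ts, dom_rhs g (length ts) L) \<in> rules (dom_aut T)"
    and L: "\<And>j. j < length ts \<Longrightarrow> L (Suc j) \<subseteq> states T \<inter> dom_states T (ts ! j)"
    and runs: "\<And>p r. p \<in> S \<Longrightarrow> produces T p (Node g ts) r \<Longrightarrow>
      \<exists>\<rho>. (p, g, length ts, \<rho>) \<in> rules T \<and> subst_rel (child_output T ts) \<rho> (to_trm r :: (_, unit) trm)
        \<and> (\<forall>j. vars_at \<rho> j \<subseteq> L j)"
    by (rule dom_aut_rule_dom_states[OF assms inp Fun.prems(3)[unfolded t]]) blast
  have "\<exists>\<zeta>. dom_aut_translation T E (L (Suc j)) (xs ! j) (ts ! j) \<zeta>" if j: "j < length ts" for j
  proof (rule Fun.IH)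
    show "xs ! j \<in> set xs" using j len by simp
    show "subst_rel E (xs ! j) (to_trm (ts ! j))" "ranked (inp T) (ts ! j)"
      "L (Suc j) \<subseteq> states T \<inter> dom_states T (ts ! j)"
      using j args ranked L by simp_all
  qed
  then obtain \<zeta>s where "length \<zeta>s = length ts"
    and "\<And>j. j < length ts \<Longrightarrow> dom_aut_translation T E (L (Suc j)) (xs ! j) (ts ! j) (\<zeta>s ! j)"
    using Skolem_list_nth[where P = "\<lambda>j. dom_aut_translation T E (L (Suc j)) (xs ! j) (ts ! j)"] by blast
  from dom_aut_translation_Fun[OF rule runs len this] show ?case unfolding t ..
qed

section \<open>The product of T1 with the domain automaton of T2\<close>

lemma states_T1hat [simp]: "states (T1hat T1 T2) = states T1 \<times> Pow (states T2)"
  and inp_T1hat [simp]: "inp (T1hat T1 T2) = inp T1"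
  by (auto simp: T1hat_def product_def)

lemma T1hat_rule_iff:
  "((q, S), a, k, \<zeta>) \<in> rules (T1hat T1 T2) \<longleftrightarrow>
    (\<exists>\<xi>. (q, a, k, \<xi>) \<in> rules T1 \<and> S \<subseteq> states T2 \<and> translates (dom_aut T2) S \<xi> \<zeta>)"
  by (auto simp: T1hat_def product_def)

lemma rhs_vars_wf_T1hat:
  assumes "wf_tdtt T1" and "wf_tdtt T2"
  shows "rhs_vars_wf (T1hat T1 T2)"
  unfolding rhs_vars_wf_def
proof clarify
  fix q S a k \<zeta> q' S' i
  assume "((q, S), a, k, \<zeta>) \<in> rules (T1hat T1 T2)" and v: "((q', S'), i) \<in> set2_trm \<zeta>"
  then obtain \<xi> where rule: "(q, a, k, \<xi>) \<in> rules T1" and "S \<in> states (dom_aut T2)"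
    and run: "big_step (dom_aut T2) S \<xi> (nest_states \<zeta>)"
    by (auto simp: T1hat_rule_iff translates_iff_big_step)
  moreover from v have "(S', Var (q', i)) \<in> set2_trm (nest_states \<zeta>)"
    by (force simp: trm.set_map)
  ultimately have "S' \<in> states (dom_aut T2)" "(q', i) \<in> set2_trm \<xi>"
    using big_step_set2[OF rhs_vars_wf_dom_aut[OF wf_tdtt_rhs_vars_wf[OF assms(2)]] run] by blast+
  moreover have "wf_rhs (outp T1) (states T1) k \<xi>"
    using rule assms(1) unfolding wf_tdtt_def by fastforce
  ultimately show "(q', S') \<in> states (T1hat T1 T2) \<and> 1 \<le> i \<and> i \<le> k"
    by (auto dest: wf_rhs_set2)
qed

lemma produces_T1hatD:
  assumes "wf_tdtt T1" and "wf_tdtt T2" and "inp T2 = outp T1"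
  shows "produces (T1hat T1 T2) (q, S) s t \<Longrightarrow> produces T1 q s t \<and> S \<subseteq> dom_states T2 t"
proof (induction s arbitrary: q S t)
  case (Node a ss)
  from Node.prems obtain \<zeta> where "((q, S), a, length ss, \<zeta>) \<in> rules (T1hat T1 T2)"
    and args: "subst_rel (child_output (T1hat T1 T2) ss) \<zeta> (to_trm t)"
    using produces_NodeE[OF rhs_vars_wf_T1hat[OF assms(1,2)]] by metis
  then obtain \<xi> where rule: "(q, a, length ss, \<xi>) \<in> rules T1" and tr: "translates (dom_aut T2) S \<xi> \<zeta>"
    by (auto simp: T1hat_rule_iff)
  from args have "subst_rel (dom_annotated T2 (child_output T1 ss)) \<zeta> (to_trm t)"
  proof (rule subst_rel_to_trm_mono)
    fix v t' assume "child_output (T1hat T1 T2) ss v (to_trm t')"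
    moreover obtain q' S' i where [simp]: "v = ((q', S'), i)" by (metis prod.exhaust)
    ultimately have "1 \<le> i" "i \<le> length ss" "q' \<in> states T1" "S' \<subseteq> states T2"
      and "produces (T1hat T1 T2) (q', S') (ss ! (i - 1)) t'" by auto
    moreover from this have "ss ! (i - 1) \<in> set ss" by simp
    ultimately show "dom_annotated T2 (child_output T1 ss) v (to_trm t')"
      using Node.IH produces_ranked[OF assms(1)] assms(3) by fastforce
  qed
  from dom_aut_translation_sound[OF wf_tdtt_rhs_vars_wf[OF assms(2)] tr this]
  have "subst_rel (child_output T1 ss) \<xi> (to_trm t)" and "S \<subseteq> dom_states T2 t" by auto
  with rule show ?case by (auto intro: produces_NodeI)
qed

lemma produces_T1hatI:
  assumes "wf_tdtt T1" and "wf_tdtt T2" and "inp T2 = outp T1"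
  shows "produces T1 q s t \<Longrightarrow> S \<subseteq> states T2 \<inter> dom_states T2 t \<Longrightarrow> produces (T1hat T1 T2) (q, S) s t"
proof (induction s arbitrary: q S t)
  case (Node a ss)
  from Node.prems(1) obtain \<xi> where rule: "(q, a, length ss, \<xi>) \<in> rules T1"
    and args: "subst_rel (child_output T1 ss) \<xi> (to_trm t :: (_, unit) trm)"
    using produces_NodeE[OF wf_tdtt_rhs_vars_wf[OF assms(1)]] by metis
  from produces_ranked[OF assms(1) Node.prems(1)] assms(3) have "ranked (inp T2) t" by simp
  from dom_aut_translation_complete[OF wf_tdtt_rhs_vars_wf[OF assms(2)] args this Node.prems(2)]
  obtain \<zeta> where tr: "translates (dom_aut T2) S \<xi> \<zeta>"
    and annotated: "subst_rel (dom_annotated T2 (child_output T1 ss)) \<zeta> (to_trm t :: (_, unit) trm)"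
    unfolding dom_aut_translation_def by blast
  from rule tr Node.prems(2) have "((q, S), a, length ss, \<zeta>) \<in> rules (T1hat T1 T2)"
    by (auto simp: T1hat_rule_iff)
  moreover from annotated have "subst_rel (child_output (T1hat T1 T2) ss) \<zeta> (to_trm t)"
  proof (rule subst_rel_to_trm_mono)
    fix v t' assume "dom_annotated T2 (child_output T1 ss) v (to_trm t')"
    moreover obtain q' S' i where [simp]: "v = ((q', S'), i)" by (metis prod.exhaust)
    ultimately have "1 \<le> i" "i \<le> length ss" "q' \<in> states T1" "S' \<subseteq> states T2 \<inter> dom_states T2 t'"
      and "produces T1 q' (ss ! (i - 1)) t'" by auto
    moreover from this have "ss ! (i - 1) \<in> set ss" by simp
    ultimately show "child_output (T1hat T1 T2) ss v (to_trm t')"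
      using Node.IH by auto
  qed
  ultimately show ?case by (rule produces_NodeI)
qed

section \<open>The look-ahead transducer M\<close>

lemma la_aut_constr_M: "la_aut (constr_M T1 T2) = dom_aut (T1hat T1 T2)"
  unfolding constr_M_def Let_def by simp

lemma states_constr_M_iff:
  "((q, S), p) \<in> states (la_trans (constr_M T1 T2)) \<longleftrightarrow> q \<in> states T1 \<and> S \<subseteq> states T2 \<and> p \<in> S"
  unfolding constr_M_def Let_def by (auto simp: product_def is_Mstate_def)

lemma constr_M_ruleI:
  assumes "((q, S), a, k, \<zeta>) \<in> rules (T1hat T1 T2)" and "p \<in> S" and "translates T2 p \<zeta> \<gamma>"
    and "\<forall>(x, i)\<in>set2_trm \<gamma>. is_Mstate x" and "length ls = k"
    and "\<And>i. i < k \<Longrightarrow> ls ! i \<subseteq> states (T1hat T1 T2) \<and> vars_at \<zeta> (Suc i) \<subseteq> ls ! i"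
  shows "(((q, S), p), (a, ls), k, \<gamma>) \<in> rules (la_trans (constr_M T1 T2))"
proof -
  from assms(1,2) have "p \<in> states T2" by (auto simp: T1hat_rule_iff)
  with assms show ?thesis
    unfolding constr_M_def Let_def by (simp add: is_Mstate_def product_def) blast
qed

lemma is_Mstate_comp_output:
  assumes "subst_rel (comp_output T E) \<gamma> (to_trm r)"
  shows "\<forall>(x, i)\<in>set2_trm \<gamma>. is_Mstate x"
proof clarify
  fix x i assume "(x, i) \<in> set2_trm \<gamma>"
  moreover obtain q S p where [simp]: "x = ((q, S), p)" by (metis prod.exhaust)
  ultimately show "is_Mstate x"
    using subst_rel_to_trm_var[OF assms] by (fastforce simp: is_Mstate_def)
qed

fun la_label :: "('f tree \<Rightarrow> 'l) \<Rightarrow> 'f tree \<Rightarrow> ('f \<times> 'l list) tree" where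
  "la_label L (Node a ss) = Node (a, map L ss) (map (la_label L) ss)"

lemma relabel_la_label:
  assumes "rhs_vars_wf T"
  shows "ranked (inp T) s \<Longrightarrow> relabel (dom_aut T) s (la_label (\<lambda>u. states T \<inter> dom_states T u) s)"
proof (induction s)
  case (Node a ss)
  then have "accepts (dom_aut T) (states T \<inter> dom_states T u) u" if "u \<in> set ss" for u
    using that by (intro dom_aut_accepts[OF assms]) auto
  with Node show ?case
    by (auto intro!: relabel.intros simp: list_all2_conv_all_nth)
qed

lemma vars_at_subset_T1hat_dom_states:
  assumes "wf_tdtt T1" and "wf_tdtt T2" and "inp T2 = outp T1"
    and "subst_rel (dom_annotated T2 (child_output T1 ss)) \<zeta> (to_trm t)"
  shows "vars_at \<zeta> (Suc i) \<subseteq> states (T1hat T1 T2) \<inter> dom_states (T1hat T1 T2) (ss ! i)"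
proof
  fix h assume "h \<in> vars_at \<zeta> (Suc i)"
  moreover obtain q S where [simp]: "h = (q, S)" by fastforce
  ultimately have "((q, S), Suc i) \<in> set2_trm \<zeta>" by (simp add: vars_at_def)
  from subst_rel_to_trm_var[OF assms(4) this] obtain t' where
    "q \<in> states T1" "produces T1 q (ss ! i) t'" "S \<subseteq> states T2 \<inter> dom_states T2 t'"
    by auto
  moreover from this(2,3) have "produces (T1hat T1 T2) (q, S) (ss ! i) t'"
    by (rule produces_T1hatI[OF assms(1-3)])
  ultimately show "h \<in> states (T1hat T1 T2) \<inter> dom_states (T1hat T1 T2) (ss ! i)"
    by (auto simp: dom_states_def)
qed

lemma produces_constr_M:
  assumes "wf_tdtt T1" and "wf_tdtt T2" and "inp T2 = outp T1"
  shows "produces T1 q s t \<Longrightarrow> S \<subseteq> states T2 \<inter> dom_states T2 t \<Longrightarrow> p \<in> S \<Longrightarrow> produces T2 p t r \<Longrightarrow>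
    produces (la_trans (constr_M T1 T2)) ((q, S), p)
      (la_label (\<lambda>u. states (T1hat T1 T2) \<inter> dom_states (T1hat T1 T2) u) s) r"
proof (induction s arbitrary: q S p t r)
  case (Node a ss)
  let ?M = "la_trans (constr_M T1 T2)"
  let ?L = "\<lambda>u. states (T1hat T1 T2) \<inter> dom_states (T1hat T1 T2) u"
  from Node.prems(1) obtain \<xi> where rule: "(q, a, length ss, \<xi>) \<in> rules T1"
    and args: "subst_rel (child_output T1 ss) \<xi> (to_trm t :: (_, unit) trm)"
    using produces_NodeE[OF wf_tdtt_rhs_vars_wf[OF assms(1)]] by metis
  from produces_ranked[OF assms(1) Node.prems(1)] assms(3) have "ranked (inp T2) t" by simp
  from dom_aut_translation_complete[OF wf_tdtt_rhs_vars_wf[OF assms(2)] args this Node.prems(2)]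
  obtain \<zeta> where tr: "translates (dom_aut T2) S \<xi> \<zeta>"
    and annotated: "subst_rel (dom_annotated T2 (child_output T1 ss)) \<zeta> (to_trm t :: (_, unit) trm)"
    and "\<forall>p r. p \<in> S \<longrightarrow> produces T2 p t r \<longrightarrow> (\<exists>\<gamma>. translates T2 p \<zeta> \<gamma>
      \<and> subst_rel (comp_output T2 (child_output T1 ss)) \<gamma> (to_trm r :: (_, unit) trm))"
    unfolding dom_aut_translation_def by blast
  with Node.prems(3,4) obtain \<gamma> where tr2: "translates T2 p \<zeta> \<gamma>"
    and comp: "subst_rel (comp_output T2 (child_output T1 ss)) \<gamma> (to_trm r :: (_, unit) trm)"
    by blast
  from rule tr Node.prems(2) have rule_T1hat: "((q, S), a, length ss, \<zeta>) \<in> rules (T1hat T1 T2)"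
    by (auto simp: T1hat_rule_iff)
  have rule_M: "(((q, S), p), (a, map ?L ss), length ss, \<gamma>) \<in> rules ?M"
    by (rule constr_M_ruleI[OF rule_T1hat Node.prems(3) tr2 is_Mstate_comp_output[OF comp]])
      (use vars_at_subset_T1hat_dom_states[OF assms annotated] in auto)
  have "subst_rel (child_output ?M (map (la_label ?L) ss)) \<gamma> (to_trm r)"
  proof (rule subst_rel_to_trm_mono[OF comp])
    fix v r' assume "comp_output T2 (child_output T1 ss) v (to_trm r')"
    moreover obtain q' S' p' i where [simp]: "v = (((q', S'), p'), i)" by (metis prod.exhaust)
    ultimately obtain t' where "1 \<le> i" "i \<le> length ss" "q' \<in> states T1"
      and "produces T1 q' (ss ! (i - 1)) t'" "S' \<subseteq> states T2 \<inter> dom_states T2 t'"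
      and "p' \<in> S'" "produces T2 p' t' r'"
      by auto
    moreover from this have "ss ! (i - 1) \<in> set ss" by simp
    ultimately show "child_output ?M (map (la_label ?L) ss) v (to_trm r')"
      using Node.IH by (auto simp: states_constr_M_iff)
  qed
  with rule_M show ?case by (auto intro: produces_NodeI)
qed

theorem lemma5:
  fixes T1 :: "('q1, 'f, 'g) tdtt" and T2 :: "('q2, 'g, 'h) tdtt"
    and s :: "'f tree" and t :: "'g tree" and r :: "'h tree"
  assumes "wf_tdtt T1" and "wf_tdtt T2" and "inp T2 = outp T1"
    and "(q1, S) \<in> states (T1hat T1 T2)" and "q2 \<in> states T2"
    and "((q1, S), q2) \<in> states (la_trans (constr_M T1 T2))"
    and "ranked (inp T1) s"
    and "produces (T1hat T1 T2) (q1, S) s t"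
    and "produces T2 q2 t r"
  shows "produces_la (constr_M T1 T2) ((q1, S), q2) s r"
proof -
  let ?L = "\<lambda>u. states (T1hat T1 T2) \<inter> dom_states (T1hat T1 T2) u"
  from produces_T1hatD[OF assms(1-3) assms(8)] assms(4)
  have "produces T1 q1 s t" and "S \<subseteq> states T2 \<inter> dom_states T2 t" by auto
  moreover from assms(6) have "q2 \<in> S" by (simp add: states_constr_M_iff)
  ultimately have "produces (la_trans (constr_M T1 T2)) ((q1, S), q2) (la_label ?L s) r"
    using produces_constr_M[OF assms(1-3)] assms(9) by blast
  moreover have "relabel (la_aut (constr_M T1 T2)) s (la_label ?L s)"
    unfolding la_aut_constr_M using relabel_la_label[OF rhs_vars_wf_T1hat[OF assms(1,2)]] assms(7)
    by simp
  ultimately show ?thesis unfolding produces_la_def by blast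
qed

end
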